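(* Let $\Phi$ be a real $C^1$-function on an open interval $J$ and let $\mathsf b>0$. Let $\Gamma_\Phi$ be the family of curves in the curvilinear rectangle $R_{J,\Phi,\mathsf b}=\{x+iy: y\in J,\ x\in(\Phi(y),\Phi(y)+\mathsf b)\}$ which join its two horizontal sides. Suppose $|\Phi'|\le C$ on $J$. Then $$\lambda(\Gamma_\Phi)\le(1+C^2)\,\lambda(\Gamma_0),$$ where $\Gamma_0$ is the family corresponding to the function identically equal to zero.
   Context: Ahlfors' extremal length of a family $\Gamma$ of (unions of countably many locally rectifiable) curves: for a non-negative measurable function $\varrho$ on $\mathbb{C}$ let $A(\varrho)=\iint\varrho^2\,dx\,dy$, $L_\gamma(\varrho)=\int_\gamma\varrho|dz|$ (set to $\infty$ if $\varrho$ is not measurable on $\gamma$ with respect to arc length), $L(\varrho)=\inf_{\gamma\in\Gamma}L_\gamma(\varrho)$; then $\lambda(\Gamma)=\sup_\varrho L(\varrho)^2/A(\varrho)$ over $\varrho$ with $0<A(\varrho)<\infty$. The horizontal sides of $R_{J,\Phi,\mathsf b}$ are the curves $\{x+iy: x\in(\Phi(y),\Phi(y)+\mathsf b)\}$ for $y$ the endpoints of $J$. *)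

theory Defs
  imports "HOL-Analysis.Analysis"
begin

definition curve_var :: "(real \<Rightarrow> complex) \<Rightarrow> real \<Rightarrow> real \<Rightarrow> ennreal" where
  "curve_var \<gamma> u v =
     (SUP (n, t) \<in> {(n::nat, t::nat \<Rightarrow> real). t 0 = u \<and> t n = v \<and> (\<forall>i<n. t i \<le> t (Suc i))}.
        ennreal (\<Sum>i<n. cmod (\<gamma> (t (Suc i)) - \<gamma> (t i))))"

definition arclen_fun :: "(real \<Rightarrow> complex) \<Rightarrow> real \<Rightarrow> real \<Rightarrow> real \<Rightarrow> real" where
  "arclen_fun \<gamma> u v t = enn2real (curve_var \<gamma> u (max u (min v t)))"

definition arclen_measure :: "(real \<Rightarrow> complex) \<Rightarrow> real \<Rightarrow> real \<Rightarrow> real measure" where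
  "arclen_measure \<gamma> u v = completion (interval_measure (arclen_fun \<gamma> u v))"

definition loc_rectifiable :: "(real \<Rightarrow> complex) \<Rightarrow> bool" where
  "loc_rectifiable \<gamma> \<longleftrightarrow> (\<forall>u v. 0 < u \<longrightarrow> u \<le> v \<longrightarrow> v < 1 \<longrightarrow> curve_var \<gamma> u v < \<infinity>)"

(* L_gamma(rho) = int_gamma rho |dz|, infinity if rho is not arc-length measurable on gamma *)
definition curve_rho_length :: "(complex \<Rightarrow> real) \<Rightarrow> (real \<Rightarrow> complex) \<Rightarrow> ennreal" where
  "curve_rho_length \<rho> \<gamma> =
     (if (\<forall>u v. 0 < u \<longrightarrow> u \<le> v \<longrightarrow> v < 1 \<longrightarrow>
            (\<lambda>t. \<rho> (\<gamma> t)) \<in> borel_measurable (arclen_measure \<gamma> u v))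
      then (SUP (u, v) \<in> {(u, v). 0 < u \<and> u \<le> v \<and> v < 1}.
              \<integral>\<^sup>+ t. ennreal (\<rho> (\<gamma> t)) \<partial>(arclen_measure \<gamma> u v))
      else \<infinity>)"

definition rho_area :: "(complex \<Rightarrow> real) \<Rightarrow> ennreal" where
  "rho_area \<rho> = (\<integral>\<^sup>+ z. ennreal ((\<rho> z)\<^sup>2) \<partial>lebesgue)"

definition family_rho_length :: "(real \<Rightarrow> complex) set \<Rightarrow> (complex \<Rightarrow> real) \<Rightarrow> ennreal" where
  "family_rho_length \<Gamma> \<rho> = (INF \<gamma> \<in> \<Gamma>. curve_rho_length \<rho> \<gamma>)"

definition admissible_metric :: "(complex \<Rightarrow> real) \<Rightarrow> bool" where
  "admissible_metric \<rho> \<longleftrightarrow> (\<forall>z. 0 \<le> \<rho> z) \<and> \<rho> \<in> borel_measurable lebesgue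
      \<and> 0 < rho_area \<rho> \<and> rho_area \<rho> < \<infinity>"

definition extremal_length :: "(real \<Rightarrow> complex) set \<Rightarrow> ennreal" where
  "extremal_length \<Gamma> =
     (SUP \<rho> \<in> {\<rho>. admissible_metric \<rho>}. (family_rho_length \<Gamma> \<rho>)\<^sup>2 / rho_area \<rho>)"

definition curv_rect :: "real \<Rightarrow> real \<Rightarrow> (real \<Rightarrow> real) \<Rightarrow> real \<Rightarrow> complex set" where
  "curv_rect a1 a2 \<Phi> bb = {z. a1 < Im z \<and> Im z < a2 \<and> \<Phi> (Im z) < Re z \<and> Re z < \<Phi> (Im z) + bb}"

definition horiz_side :: "(real \<Rightarrow> real) \<Rightarrow> real \<Rightarrow> real \<Rightarrow> complex set" where
  "horiz_side \<Phi> bb y = {z. Im z = y \<and> \<Phi> y < Re z \<and> Re z < \<Phi> y + bb}"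

definition joining_family :: "real \<Rightarrow> real \<Rightarrow> (real \<Rightarrow> real) \<Rightarrow> real \<Rightarrow> (real \<Rightarrow> complex) set" where
  "joining_family a1 a2 \<Phi> bb =
     {\<gamma>. continuous_on {0..1} \<gamma> \<and> loc_rectifiable \<gamma>
        \<and> (\<forall>t\<in>{0<..<1}. \<gamma> t \<in> curv_rect a1 a2 \<Phi> bb)
        \<and> ((\<gamma> 0 \<in> horiz_side \<Phi> bb a1 \<and> \<gamma> 1 \<in> horiz_side \<Phi> bb a2)
           \<or> (\<gamma> 0 \<in> horiz_side \<Phi> bb a2 \<and> \<gamma> 1 \<in> horiz_side \<Phi> bb a1))}"

end

(*
  For an admissible metric rho, every translate x + Phi(y) + iy, 0 < x < b, of the graph of Phi
  joins the horizontal sides of R, and along it |dz| <= sqrt(1 + C^2) dy because Phi is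
  C-Lipschitz. Hence b L(rho) <= sqrt(1 + C^2) times the integral of rho over R, after averaging
  over x and undoing the area-preserving shear (x, y) |-> (x + Phi(y), y); Cauchy-Schwarz then
  gives L(rho)^2 / A(rho) <= (1 + C^2) |J| / b. Conversely rho = 1 on the straight rectangle
  shows that the extremal length of Gamma_0 is at least |J| / b, since every curve of Gamma_0
  has length at least |J|.
*)

theory Submission
  imports Defs
begin

section \<open>Variation of a curve\<close>

definition is_partition :: "real \<Rightarrow> real \<Rightarrow> nat \<Rightarrow> (nat \<Rightarrow> real) \<Rightarrow> bool" where
  "is_partition u v n t \<longleftrightarrow> t 0 = u \<and> t n = v \<and> (\<forall>i<n. t i \<le> t (Suc i))"

definition partition_sum :: "(real \<Rightarrow> complex) \<Rightarrow> nat \<Rightarrow> (nat \<Rightarrow> real) \<Rightarrow> real" where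
  "partition_sum \<gamma> n t = (\<Sum>i<n. cmod (\<gamma> (t (Suc i)) - \<gamma> (t i)))"

lemma curve_var_eq_SUP_partition_sum:
  "curve_var \<gamma> u v = (SUP (n, t) \<in> {(n, t). is_partition u v n t}. ennreal (partition_sum \<gamma> n t))"
  unfolding curve_var_def is_partition_def partition_sum_def by simp

lemma partition_sum_le_curve_var:
  "is_partition u v n t \<Longrightarrow> ennreal (partition_sum \<gamma> n t) \<le> curve_var \<gamma> u v"
  unfolding curve_var_eq_SUP_partition_sum by (rule SUP_upper2[where i="(n, t)"]) auto

lemma curve_var_leI:
  "(\<And>n t. is_partition u v n t \<Longrightarrow> ennreal (partition_sum \<gamma> n t) \<le> X) \<Longrightarrow> curve_var \<gamma> u v \<le> X"
  unfolding curve_var_eq_SUP_partition_sum by (rule SUP_least) auto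

lemma partition_sum_nonneg: "0 \<le> partition_sum \<gamma> n t"
  unfolding partition_sum_def by (auto intro: sum_nonneg)

lemma is_partition_mono:
  assumes "is_partition u v n t" "i \<le> j" "j \<le> n"
  shows "t i \<le> t j"
proof -
  have "\<And>k. k \<in> {..<n} \<Longrightarrow> t k \<le> t (Suc k)" using assms(1) by (auto simp: is_partition_def)
  then show ?thesis by (rule lift_Suc_mono_le_ivl[where N="{..<n}"]) (use assms(2,3) in auto)
qed

lemma is_partition_bounds:
  assumes "is_partition u v n t" "i \<le> n"
  shows "u \<le> t i" "t i \<le> v"
  using is_partition_mono[OF assms(1), of 0 i] is_partition_mono[OF assms(1), of i n] assms
  by (auto simp: is_partition_def)

lemma is_partition_trivial: "u \<le> v \<Longrightarrow> is_partition u v 1 (\<lambda>i. if i = 0 then u else v)"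
  by (auto simp: is_partition_def)

lemma curve_var_ge_dist: "u \<le> v \<Longrightarrow> ennreal (cmod (\<gamma> v - \<gamma> u)) \<le> curve_var \<gamma> u v"
  using partition_sum_le_curve_var[OF is_partition_trivial, of u v \<gamma>] by (simp add: partition_sum_def)

lemma curve_var_same [simp]: "curve_var \<gamma> u u = 0"
proof -
  have "curve_var \<gamma> u u \<le> 0"
  proof (rule curve_var_leI)
    fix n t assume p: "is_partition u u n t"
    have "t i = u" if "i \<le> n" for i
      using is_partition_bounds[OF p that] by simp
    then have "partition_sum \<gamma> n t = 0"
      unfolding partition_sum_def by (simp add: sum.neutral)
    then show "ennreal (partition_sum \<gamma> n t) \<le> 0" by simp
  qed
  then show ?thesis by simp
qed

lemma curve_var_le_lipschitz:
  assumes "K-lipschitz_on {u..v} \<gamma>"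
  shows "curve_var \<gamma> u v \<le> ennreal (K * (v - u))"
proof (rule curve_var_leI)
  fix n t assume p: "is_partition u v n t"
  have "partition_sum \<gamma> n t \<le> (\<Sum>i<n. K * (t (Suc i) - t i))"
    unfolding partition_sum_def
  proof (rule sum_mono)
    fix i assume "i \<in> {..<n}"
    then have "t i \<in> {u..v}" "t (Suc i) \<in> {u..v}" "t i \<le> t (Suc i)"
      using is_partition_bounds[OF p, of i] is_partition_bounds[OF p, of "Suc i"] p
      by (auto simp: is_partition_def)
    then show "cmod (\<gamma> (t (Suc i)) - \<gamma> (t i)) \<le> K * (t (Suc i) - t i)"
      using lipschitz_onD[OF assms] by (fastforce simp: dist_norm dist_real_def)
  qed
  also have "\<dots> = K * (v - u)"
    using p by (simp add: sum_distrib_left[symmetric] sum_lessThan_telescope is_partition_def)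
  finally show "ennreal (partition_sum \<gamma> n t) \<le> ennreal (K * (v - u))" by (rule ennreal_leI)
qed

lemma sum_lessThan_add_split:
  fixes f :: "nat \<Rightarrow> 'a::comm_monoid_add"
  shows "(\<Sum>i<a+b. f i) = (\<Sum>i<a. f i) + (\<Sum>i<b. f (a+i))"
  by (induction b) (auto simp: add.assoc)

lemma is_partition_append:
  assumes p1: "is_partition u w n t" and p2: "is_partition w v m s"
  obtains r where "is_partition u v (n + m) r"
    "partition_sum \<gamma> (n + m) r = partition_sum \<gamma> n t + partition_sum \<gamma> m s"
proof -
  define r where "r i = (if i \<le> n then t i else s (i - n))" for i
  have r_shift: "r (n + j) = s j" for j
    using p1 p2 by (cases j) (auto simp: r_def is_partition_def)
  have "is_partition u v (n + m) r"
    unfolding is_partition_def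
  proof (intro conjI allI impI)
    show "r 0 = u" using p1 by (simp add: r_def is_partition_def)
    show "r (n + m) = v" using r_shift[of m] p2 by (simp add: is_partition_def)
    fix i assume i: "i < n + m"
    show "r i \<le> r (Suc i)"
    proof (cases "i < n")
      case True then show ?thesis using p1 by (auto simp: r_def is_partition_def)
    next
      case False
      then obtain j where "i = n + j" "j < m" using i by (metis add_less_cancel_left le_iff_add not_less)
      then show ?thesis using r_shift[of j] r_shift[of "Suc j"] p2 by (auto simp: is_partition_def)
    qed
  qed
  moreover have "partition_sum \<gamma> (n + m) r = partition_sum \<gamma> n t + partition_sum \<gamma> m s"
    unfolding partition_sum_def sum_lessThan_add_split
    using r_shift by (auto simp: r_def intro!: sum.cong)
  ultimately show ?thesis by (rule that)
qed

text \<open>Splitting at \<open>w\<close> inserts \<open>w\<close> as a new point, so by the triangle inequality the sum can only grow.\<close>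
lemma is_partition_split:
  assumes p: "is_partition u v n t" and w: "u \<le> w" "w \<le> v"
  obtains n1 t1 n2 t2 where "is_partition u w n1 t1" "is_partition w v n2 t2" "n1 \<le> n"
    "partition_sum \<gamma> n t \<le> partition_sum \<gamma> n1 t1 + partition_sum \<gamma> n2 t2"
proof (cases "w = u")
  case True
  have "is_partition u w 0 (\<lambda>_. u)" using True by (simp add: is_partition_def)
  moreover have "is_partition w v n t" using p True by simp
  ultimately show ?thesis by (rule that) (auto simp: partition_sum_def)
next
  case False
  then have uw: "u < w" using w by simp
  define j where "j = (LEAST j. w \<le> t j)"
  have tn: "w \<le> t n" using p w by (simp add: is_partition_def)
  have "j \<le> n" unfolding j_def by (rule Least_le) (rule tn)
  have wj: "w \<le> t j" unfolding j_def by (rule LeastI) (rule tn)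
  have "j \<noteq> 0"
  proof
    assume "j = 0"
    with wj p uw show False by (simp add: is_partition_def)
  qed
  then obtain k where k: "j = Suc k" by (cases j) auto
  have tk: "t k < w"
    using not_less_Least[of k "\<lambda>j. w \<le> t j"] k by (simp add: j_def)
  obtain m where m: "n = Suc k + m" using \<open>j \<le> n\<close> k by (metis le_iff_add)
  define t1 where "t1 i = (if i \<le> k then t i else w)" for i
  define t2 where "t2 i = (if i = 0 then w else t (k + i))" for i
  have p1: "is_partition u w (Suc k) t1"
    using p tk m by (auto simp: is_partition_def t1_def less_Suc_eq)
  have p2: "is_partition w v (Suc m) t2"
    using p wj k m by (auto simp: is_partition_def t2_def)
  have s1: "partition_sum \<gamma> (Suc k) t1 =
      (\<Sum>i<k. cmod (\<gamma> (t (Suc i)) - \<gamma> (t i))) + cmod (\<gamma> w - \<gamma> (t k))"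
    unfolding partition_sum_def by (auto simp: t1_def intro!: sum.cong)
  have s2: "partition_sum \<gamma> (Suc m) t2 = cmod (\<gamma> (t (Suc k)) - \<gamma> w)
      + (\<Sum>i<m. cmod (\<gamma> (t (Suc k + Suc i)) - \<gamma> (t (Suc k + i))))"
    unfolding partition_sum_def sum.lessThan_Suc_shift by (auto simp: t2_def intro!: sum.cong)
  have s: "partition_sum \<gamma> n t = (\<Sum>i<k. cmod (\<gamma> (t (Suc i)) - \<gamma> (t i)))
      + cmod (\<gamma> (t (Suc k)) - \<gamma> (t k))
      + (\<Sum>i<m. cmod (\<gamma> (t (Suc k + Suc i)) - \<gamma> (t (Suc k + i))))"
    unfolding partition_sum_def m sum_lessThan_add_split by simp
  have "cmod (\<gamma> (t (Suc k)) - \<gamma> (t k)) \<le> cmod (\<gamma> w - \<gamma> (t k)) + cmod (\<gamma> (t (Suc k)) - \<gamma> w)"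
    using norm_triangle_ineq[of "\<gamma> w - \<gamma> (t k)" "\<gamma> (t (Suc k)) - \<gamma> w"] by simp
  then have "partition_sum \<gamma> n t \<le> partition_sum \<gamma> (Suc k) t1 + partition_sum \<gamma> (Suc m) t2"
    unfolding s s1 s2 by simp
  then show ?thesis using p1 p2 m by (intro that) auto
qed

lemma curve_var_add:
  assumes "u \<le> w" "w \<le> v"
  shows "curve_var \<gamma> u v = curve_var \<gamma> u w + curve_var \<gamma> w v"
proof (rule antisym)
  show "curve_var \<gamma> u v \<le> curve_var \<gamma> u w + curve_var \<gamma> w v"
  proof (rule curve_var_leI)
    fix n t assume "is_partition u v n t"
    then obtain n1 t1 n2 t2 where p: "is_partition u w n1 t1" "is_partition w v n2 t2"
      and le: "partition_sum \<gamma> n t \<le> partition_sum \<gamma> n1 t1 + partition_sum \<gamma> n2 t2"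
      using assms by (rule is_partition_split)
    have "ennreal (partition_sum \<gamma> n t) \<le> ennreal (partition_sum \<gamma> n1 t1) + ennreal (partition_sum \<gamma> n2 t2)"
      using le by (simp add: ennreal_plus[symmetric] partition_sum_nonneg ennreal_leI del: ennreal_plus)
    also have "\<dots> \<le> curve_var \<gamma> u w + curve_var \<gamma> w v"
      using p by (intro add_mono partition_sum_le_curve_var)
    finally show "ennreal (partition_sum \<gamma> n t) \<le> curve_var \<gamma> u w + curve_var \<gamma> w v" .
  qed
next
  have sum_le: "ennreal (partition_sum \<gamma> n t) + ennreal (partition_sum \<gamma> m s) \<le> curve_var \<gamma> u v"
    if p: "is_partition u w n t" "is_partition w v m s" for n t m s
  proof -
    obtain r where "is_partition u v (n + m) r"
      "partition_sum \<gamma> (n + m) r = partition_sum \<gamma> n t + partition_sum \<gamma> m s"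
      by (rule is_partition_append[OF p])
    then show ?thesis
      using partition_sum_le_curve_var[of u v "n + m" r \<gamma>]
      by (simp add: ennreal_plus[symmetric] partition_sum_nonneg del: ennreal_plus)
  qed
  have ne: "{(n, t). is_partition u w n t} \<noteq> {}" "{(n, t). is_partition w v n t} \<noteq> {}"
    using is_partition_trivial assms by blast+
  have "curve_var \<gamma> u w + ennreal (partition_sum \<gamma> m s) \<le> curve_var \<gamma> u v"
    if "is_partition w v m s" for m s
    unfolding curve_var_eq_SUP_partition_sum[of \<gamma> u w]
    by (subst ennreal_SUP_add_left[OF ne(1), symmetric]) (auto intro!: SUP_least sum_le that)
  then show "curve_var \<gamma> u w + curve_var \<gamma> w v \<le> curve_var \<gamma> u v"
    unfolding curve_var_eq_SUP_partition_sum[of \<gamma> w v]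
    by (subst ennreal_SUP_add_right[OF ne(2)]) (auto intro!: SUP_least)
qed

lemma curve_var_mono: "u \<le> w \<Longrightarrow> w \<le> v \<Longrightarrow> curve_var \<gamma> u w \<le> curve_var \<gamma> u v"
  using curve_var_add[of u w v \<gamma>] by simp

lemma curve_var_finite_subinterval:
  assumes "curve_var \<gamma> u v < \<infinity>" "u \<le> a" "a \<le> b" "b \<le> v"
  shows "curve_var \<gamma> a b < \<infinity>"
proof -
  have "curve_var \<gamma> a b \<le> curve_var \<gamma> a v" using curve_var_mono assms by blast
  also have "\<dots> \<le> curve_var \<gamma> u v" using curve_var_add[of u a v \<gamma>] assms by simp
  finally show ?thesis using assms(1) by simp
qed

lemma partition_sum_le_oscillation:
  assumes p: "is_partition a b n t" and osc: "\<And>s. s \<in> {a..b} \<Longrightarrow> cmod (\<gamma> s - \<gamma> a) \<le> \<eta>"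
  shows "partition_sum \<gamma> n t \<le> 2 * real n * \<eta>"
proof -
  have "cmod (\<gamma> (t (Suc i)) - \<gamma> (t i)) \<le> 2 * \<eta>" if "i < n" for i
  proof -
    have "t i \<in> {a..b}" "t (Suc i) \<in> {a..b}"
      using is_partition_bounds[OF p, of i] is_partition_bounds[OF p, of "Suc i"] that by auto
    then have "cmod (\<gamma> (t (Suc i)) - \<gamma> a) \<le> \<eta>" "cmod (\<gamma> (t i) - \<gamma> a) \<le> \<eta>"
      using osc by auto
    then show ?thesis
      using norm_triangle_ineq4[of "\<gamma> (t (Suc i)) - \<gamma> a" "\<gamma> (t i) - \<gamma> a"] by simp
  qed
  then have "partition_sum \<gamma> n t \<le> (\<Sum>i<n. 2 * \<eta>)"
    unfolding partition_sum_def by (intro sum_mono) auto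
  then show ?thesis by simp
qed

lemma curve_var_initial_le:
  assumes p: "is_partition t v n \<tau>" and s: "t \<le> s" "s \<le> v"
    and osc: "\<And>r. r \<in> {t..s} \<Longrightarrow> cmod (\<gamma> r - \<gamma> t) \<le> \<eta>"
  shows "curve_var \<gamma> t s + ennreal (partition_sum \<gamma> n \<tau>) \<le> curve_var \<gamma> t v + ennreal (2 * real n * \<eta>)"
proof -
  obtain n1 t1 n2 t2 where p1: "is_partition t s n1 t1" and p2: "is_partition s v n2 t2"
    and "n1 \<le> n" and split: "partition_sum \<gamma> n \<tau> \<le> partition_sum \<gamma> n1 t1 + partition_sum \<gamma> n2 t2"
    using is_partition_split[OF p s] .
  have "0 \<le> \<eta>" using osc[of t] s by simp
  have "partition_sum \<gamma> n1 t1 \<le> 2 * real n1 * \<eta>"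
    by (rule partition_sum_le_oscillation[OF p1]) (rule osc)
  also have "\<dots> \<le> 2 * real n * \<eta>" using \<open>n1 \<le> n\<close> \<open>0 \<le> \<eta>\<close> by (simp add: mult_right_mono)
  finally have "partition_sum \<gamma> n1 t1 \<le> 2 * real n * \<eta>" .
  then have "ennreal (partition_sum \<gamma> n \<tau>) \<le> ennreal (2 * real n * \<eta> + partition_sum \<gamma> n2 t2)"
    using split by (intro ennreal_leI) linarith
  also have "\<dots> = ennreal (2 * real n * \<eta>) + ennreal (partition_sum \<gamma> n2 t2)"
    using \<open>0 \<le> \<eta>\<close> by (intro ennreal_plus) (auto simp: partition_sum_nonneg)
  also have "\<dots> \<le> ennreal (2 * real n * \<eta>) + curve_var \<gamma> s v"
    using partition_sum_le_curve_var[OF p2] by (rule add_left_mono)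
  finally show ?thesis
    using curve_var_add[OF s, of \<gamma>] by (metis add.assoc add.commute add_left_mono)
qed

text \<open>A partition of \<open>[t, v]\<close> nearly attaining the variation has only finitely many intervals,
  so near \<open>t\<close> its refinement at \<open>s\<close> loses little.\<close>
lemma curve_var_small_near_left_end:
  assumes cont: "continuous_on {t..v} \<gamma>" and fin: "curve_var \<gamma> t v < \<infinity>" and "0 < \<epsilon>"
  obtains \<delta> where "\<delta> > 0" "\<And>s. t \<le> s \<Longrightarrow> s \<le> v \<Longrightarrow> s < t + \<delta> \<Longrightarrow> curve_var \<gamma> t s < ennreal \<epsilon>"
proof (cases "curve_var \<gamma> t v = 0")
  case True
  then show ?thesis
    using curve_var_mono[of t _ v \<gamma>] \<open>0 < \<epsilon>\<close> by (intro that[of 1]) (auto intro: le_less_trans)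
next
  case False
  obtain V where V: "curve_var \<gamma> t v = ennreal V" "0 < V"
    using fin False by (cases "curve_var \<gamma> t v") (auto simp: ennreal_eq_0_iff)
  then have "ennreal (V - \<epsilon>/2) < curve_var \<gamma> t v" using \<open>0 < \<epsilon>\<close> by (simp add: ennreal_lessI)
  then obtain n \<tau> where p: "is_partition t v n \<tau>" and "ennreal (V - \<epsilon>/2) < ennreal (partition_sum \<gamma> n \<tau>)"
    unfolding curve_var_eq_SUP_partition_sum less_SUP_iff by auto
  then have near: "V - \<epsilon>/2 < partition_sum \<gamma> n \<tau>" by (meson ennreal_leI not_le)
  define \<eta> where "\<eta> = \<epsilon> / (4 * (real n + 1))"
  have "0 < \<eta>" and small: "2 * real n * \<eta> < \<epsilon>/2" using \<open>0 < \<epsilon>\<close> by (simp_all add: \<eta>_def field_simps)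
  have "t \<le> v" using is_partition_bounds[OF p, of 0] by simp
  then obtain d where "d > 0" and d: "\<And>s. s \<in> {t..v} \<Longrightarrow> dist s t < d \<Longrightarrow> dist (\<gamma> s) (\<gamma> t) < \<eta>"
    using cont \<open>0 < \<eta>\<close> unfolding continuous_on_iff by (metis atLeastAtMost_iff order_refl)
  show ?thesis
  proof (rule that[OF \<open>d > 0\<close>])
    fix s assume s: "t \<le> s" "s \<le> v" "s < t + d"
    have "curve_var \<gamma> t s + ennreal (partition_sum \<gamma> n \<tau>) \<le> ennreal V + ennreal (2 * real n * \<eta>)"
      using curve_var_initial_le[OF p s(1,2), of \<gamma> \<eta>] d s V(1) by (force simp: dist_norm)
    moreover obtain x where "curve_var \<gamma> t s = ennreal x" "0 \<le> x"
      using curve_var_finite_subinterval[OF fin order_refl s(1,2)] by (cases "curve_var \<gamma> t s") auto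
    ultimately show "curve_var \<gamma> t s < ennreal \<epsilon>"
      using near small V(2) \<open>0 < \<eta>\<close> partition_sum_nonneg[of \<gamma> n \<tau>]
      by (simp add: ennreal_plus[symmetric] ennreal_lessI del: ennreal_plus)
  qed
qed

section \<open>Interval measures\<close>

lemma measure_eqI_Ioc:
  fixes M N :: "real measure"
  assumes sets: "sets M = sets borel" "sets N = sets borel"
    and eq: "\<And>a b. a \<le> b \<Longrightarrow> emeasure M {a<..b} = emeasure N {a<..b}"
    and fin: "\<And>a b. emeasure M {a<..b} \<noteq> \<infinity>"
  shows "M = N"
proof (rule measure_eqI_generator_eq[where E="range (\<lambda>(a, b). {a<..b})" and \<Omega>=UNIV
      and A="\<lambda>i. {- real i<..real i}"])
  show "Int_stable (range (\<lambda>(a, b). {a<..b::real}))"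
  proof (rule Int_stableI)
    fix A B assume "A \<in> range (\<lambda>(a, b). {a<..b::real})" "B \<in> range (\<lambda>(a, b). {a<..b::real})"
    then obtain a b c d where "A = {a<..b}" "B = {c<..d}" by auto
    then have "A \<inter> B = {max a c<..min b d}" by auto
    then show "A \<inter> B \<in> range (\<lambda>(a, b). {a<..b})" by auto
  qed
  show "sets M = sigma_sets UNIV (range (\<lambda>(a, b). {a<..b}))"
    "sets N = sigma_sets UNIV (range (\<lambda>(a, b). {a<..b}))"
    using sets by (simp_all add: borel_sigma_sets_Ioc)
  show "emeasure M X = emeasure N X" if "X \<in> range (\<lambda>(a, b). {a<..b})" for X
  proof -
    from that obtain p where "X = (case p of (a, b) \<Rightarrow> {a<..b})" by blast
    then obtain a b where "X = {a<..b}" by (cases p) auto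
    then show ?thesis using eq[of a b] by (cases "a \<le> b") auto
  qed
  show "range (\<lambda>i. {- real i<..real i}) \<subseteq> range (\<lambda>(a, b). {a<..b})" by auto
  show "emeasure M {- real i<..real i} \<noteq> \<infinity>" for i by (rule fin)
  show "(\<Union>i. {- real i<..real i}) = UNIV"
  proof (intro set_eqI iffI)
    fix x :: real
    obtain n :: nat where "\<bar>x\<bar> < n" using reals_Archimedean2 by blast
    then show "x \<in> (\<Union>i. {- real i<..real i})" by (intro UN_I[of n]) auto
  qed auto
qed auto

lemma emeasure_interval_measure_add_linear:
  fixes F G :: "real \<Rightarrow> real"
  assumes monoF: "\<And>x y. x \<le> y \<Longrightarrow> F x \<le> F y" and rcF: "\<And>a. continuous (at_right a) F"
    and monoG: "\<And>x y. x \<le> y \<Longrightarrow> G x \<le> G y" and rcG: "\<And>a. continuous (at_right a) G"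
    and sum: "\<And>x. F x + G x = K * x" and A: "A \<in> sets borel"
  shows "emeasure (interval_measure F) A + emeasure (interval_measure G) A
    = emeasure (density lborel (\<lambda>_. ennreal K)) A"
proof -
  have "0 \<le> K" using monoF[of 0 1] monoG[of 0 1] sum[of 0] sum[of 1] by simp
  define S where "S = measure_of UNIV (sets borel)
      (\<lambda>A. emeasure (interval_measure F) A + emeasure (interval_measure G) A)"
  have emeasure_S: "emeasure S A = emeasure (interval_measure F) A + emeasure (interval_measure G) A"
    if "A \<in> sets borel" for A
    unfolding S_def
  proof (rule emeasure_measure_of_sigma[OF _ _ _ that])
    show "sigma_algebra UNIV (sets borel)" by (metis sets.sigma_algebra_axioms space_borel)
    show "positive (sets borel) (\<lambda>A. emeasure (interval_measure F) A + emeasure (interval_measure G) A)"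
      by (simp add: positive_def)
    show "countably_additive (sets borel)
        (\<lambda>A. emeasure (interval_measure F) A + emeasure (interval_measure G) A)"
      unfolding countably_additive_def
      by (simp add: suminf_add[symmetric] summableI suminf_emeasure)
  qed
  have Ioc: "emeasure S {a<..b} = ennreal (K * (b - a))" if "a \<le> b" for a b
  proof -
    have "emeasure S {a<..b} = ennreal (F b - F a) + ennreal (G b - G a)"
      using that by (simp add: emeasure_S emeasure_interval_measure_Ioc monoF monoG rcF rcG)
    also have "\<dots> = ennreal (K * (b - a))"
      using monoF[OF that] monoG[OF that] sum[of a] sum[of b]
      by (simp add: ennreal_plus[symmetric] algebra_simps del: ennreal_plus)
    finally show ?thesis .
  qed
  have "S = density lborel (\<lambda>_. ennreal K)"
  proof (rule measure_eqI_Ioc)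
    show "sets S = sets borel" using sets.sigma_sets_eq[of borel] by (simp add: S_def)
    show "emeasure S {a<..b} = emeasure (density lborel (\<lambda>_. ennreal K)) {a<..b}" if "a \<le> b" for a b
      using that \<open>0 \<le> K\<close> by (simp add: Ioc emeasure_density nn_integral_cmult_indicator ennreal_mult)
    show "emeasure S {a<..b} \<noteq> \<infinity>" for a b
      by (cases "a \<le> b") (simp_all add: Ioc)
  qed simp
  then show ?thesis using emeasure_S[OF A] by simp
qed

text \<open>\<open>x \<mapsto> K x - F x\<close> is nondecreasing as well, so the interval measure of \<open>F\<close> is one
  of two summands of \<open>K\<close> times Lebesgue measure.\<close>
lemma interval_measure_le_density:
  fixes F :: "real \<Rightarrow> real"
  assumes mono: "\<And>x y. x \<le> y \<Longrightarrow> F x \<le> F y"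
    and lip: "\<And>x y. x \<le> y \<Longrightarrow> F y - F x \<le> K * (y - x)"
  shows "interval_measure F \<le> density lborel (\<lambda>_. ennreal K)"
proof -
  define G where "G x = K * x - F x" for x
  have "0 \<le> K" using lip[of 0 1] mono[of 0 1] by simp
  have monoG: "G x \<le> G y" if "x \<le> y" for x y using lip[OF that] by (simp add: G_def algebra_simps)
  have "K-lipschitz_on UNIV F"
  proof (rule lipschitz_onI[OF _ \<open>0 \<le> K\<close>])
    fix x y :: real
    show "dist (F x) (F y) \<le> K * dist x y"
      using lip[of x y] lip[of y x] mono[of x y] mono[of y x]
      by (cases "x \<le> y") (auto simp: dist_real_def abs_if)
  qed
  then have "continuous_on UNIV F" by (rule lipschitz_on_continuous_on)
  then have rcF: "continuous (at_right a) F" for a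
    by (auto simp: continuous_on_eq_continuous_at intro: continuous_at_imp_continuous_at_within)
  have rcG: "continuous (at_right a) G" for a
    unfolding G_def by (intro continuous_intros rcF)
  have "emeasure (interval_measure F) A \<le> emeasure (density lborel (\<lambda>_. ennreal K)) A"
    if "A \<in> sets borel" for A
  proof -
    have "emeasure (interval_measure F) A + emeasure (interval_measure G) A
        = emeasure (density lborel (\<lambda>_. ennreal K)) A"
      using emeasure_interval_measure_add_linear[OF mono rcF monoG rcG _ that] by (simp add: G_def)
    then show ?thesis by (metis le_iff_add)
  qed
  then show ?thesis by (simp add: le_measure)
qed

lemma interval_measure_outside_null:
  fixes F :: "real \<Rightarrow> real"
  assumes mono: "\<And>x y. x \<le> y \<Longrightarrow> F x \<le> F y" and rc: "\<And>a. continuous (at_right a) F"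
    and "u \<le> v" and lo: "\<And>x. x \<le> u \<Longrightarrow> F x = F u" and hi: "\<And>x. v \<le> x \<Longrightarrow> F x = F v"
  shows "- {u<..v} \<in> null_sets (interval_measure F)"
proof -
  have cover: "- {u<..v} \<subseteq> (\<Union>n::nat. {u - real n<..u}) \<union> (\<Union>n::nat. {v<..v + real n})"
  proof
    fix x assume x: "x \<in> - {u<..v}"
    obtain n :: nat where n: "\<bar>x - u\<bar> + \<bar>x - v\<bar> < n" using reals_Archimedean2 by blast
    show "x \<in> (\<Union>n::nat. {u - real n<..u}) \<union> (\<Union>n::nat. {v<..v + real n})"
    proof (cases "x \<le> u")
      case True
      then have "x \<in> {u - real n<..u}" using n by auto
      then show ?thesis by blast
    next
      case False
      then have "x \<in> {v<..v + real n}" using n x by auto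
      then show ?thesis by blast
    qed
  qed
  have left: "{u - real n<..u} \<in> null_sets (interval_measure F)" for n
    using emeasure_interval_measure_Ioc[of "u - real n" u F, OF _ mono rc] lo[of "u - real n"]
    by (simp add: null_sets_def)
  have right: "{v<..v + real n} \<in> null_sets (interval_measure F)" for n
    using emeasure_interval_measure_Ioc[of v "v + real n" F, OF _ mono rc] hi[of "v + real n"]
    by (simp add: null_sets_def)
  have "(\<Union>n::nat. {u - real n<..u}) \<union> (\<Union>n::nat. {v<..v + real n}) \<in> null_sets (interval_measure F)"
    by (intro null_sets.Un null_sets_UN left right)
  then show ?thesis by (rule null_sets_subset) (use cover in auto)
qed

lemma AE_le_measure:
  assumes "M \<le> N" "sets M = sets N" "AE x in N. P x"
  shows "AE x in M. P x"
proof -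
  obtain A where A: "A \<in> null_sets N" "{x \<in> space N. \<not> P x} \<subseteq> A"
    by (rule AE_E[OF assms(3)]) (auto simp: null_sets_def)
  have "emeasure M A \<le> emeasure N A" by (rule le_measureD3[OF assms(1,2)])
  then have "A \<in> null_sets M" using A(1) assms(2) by (auto simp: null_sets_def)
  then show ?thesis using A(2) assms(2) sets_eq_imp_space_eq[OF assms(2)] by (auto intro: AE_I')
qed

lemma measurable_completion_AE:
  fixes f h :: "'a \<Rightarrow> 'b::topological_space"
  assumes h: "h \<in> borel_measurable M" and ae: "AE x in M. f x = h x"
  shows "f \<in> borel_measurable (completion M)"
proof (rule measurableI)
  from ae obtain N where N: "N \<in> null_sets M" "{x\<in>space M. f x \<noteq> h x} \<subseteq> N"
    by (auto elim!: AE_E)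
  fix A :: "'b set" assume "A \<in> sets borel"
  have eq: "f -` A \<inter> space (completion M) = ((h -` A \<inter> space M) - N) \<union> ((f -` A \<inter> space M) \<inter> N)"
    using N(2) by auto
  have "(h -` A \<inter> space M) - N \<in> sets M"
    using measurable_sets[OF h \<open>A \<in> sets borel\<close>] N(1) by blast
  moreover have "(f -` A \<inter> space M) \<inter> N \<in> null_sets (completion M)"
    by (rule null_sets_completion_subset[of _ N]) (use N(1) null_sets_completionI in auto)
  ultimately show "f -` A \<inter> space (completion M) \<in> sets (completion M)"
    unfolding eq by auto
qed simp

section \<open>Arc length\<close>

lemma arclen_fun_diff:
  assumes "u \<le> v" "curve_var \<gamma> u v < \<infinity>" "x \<le> y"
  shows "arclen_fun \<gamma> u v y - arclen_fun \<gamma> u v x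
    = enn2real (curve_var \<gamma> (max u (min v x)) (max u (min v y)))"
proof -
  let ?a = "max u (min v x)" and ?b = "max u (min v y)"
  have ab: "u \<le> ?a" "?a \<le> ?b" "?b \<le> v" using assms by auto
  then have "curve_var \<gamma> u ?b = curve_var \<gamma> u ?a + curve_var \<gamma> ?a ?b"
    by (intro curve_var_add)
  moreover have "curve_var \<gamma> u ?a < \<infinity>" "curve_var \<gamma> ?a ?b < \<infinity>"
    using curve_var_finite_subinterval[OF assms(2)] ab by auto
  ultimately show ?thesis by (simp add: arclen_fun_def enn2real_plus less_top)
qed

lemma arclen_fun_mono:
  assumes "u \<le> v" "curve_var \<gamma> u v < \<infinity>" "x \<le> y"
  shows "arclen_fun \<gamma> u v x \<le> arclen_fun \<gamma> u v y"
  using arclen_fun_diff[OF assms] by (metis diff_ge_0_iff_ge enn2real_nonneg)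

lemma arclen_fun_continuous_at_right:
  assumes uv: "u \<le> v" and fin: "curve_var \<gamma> u v < \<infinity>" and cont: "continuous_on {u..v} \<gamma>"
  shows "continuous (at_right a) (arclen_fun \<gamma> u v)"
proof (subst continuous_at_right_real_increasing)
  show "\<And>x y. x \<le> y \<Longrightarrow> arclen_fun \<gamma> u v x \<le> arclen_fun \<gamma> u v y"
    by (rule arclen_fun_mono[OF uv fin])
  show "\<forall>\<epsilon>>0. \<exists>\<delta>>0. arclen_fun \<gamma> u v (a + \<delta>) - arclen_fun \<gamma> u v a < \<epsilon>"
  proof (intro allI impI)
    fix \<epsilon> :: real assume "0 < \<epsilon>"
    show "\<exists>\<delta>>0. arclen_fun \<gamma> u v (a + \<delta>) - arclen_fun \<gamma> u v a < \<epsilon>"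
    proof (cases "u \<le> a \<and> a < v")
      case False
      define \<delta> where "\<delta> = (if a < u then u - a else 1)"
      have "\<delta> > 0" "max u (min v (a + \<delta>)) = max u (min v a)"
        using False uv by (auto simp: \<delta>_def)
      then show ?thesis
        using arclen_fun_diff[OF uv fin, of a "a + \<delta>"] \<open>0 < \<epsilon>\<close> by (intro exI[of _ \<delta>]) simp
    next
      case True
      have cont': "continuous_on {a..v} \<gamma>" using True by (intro continuous_on_subset[OF cont]) auto
      have fin': "curve_var \<gamma> a v < \<infinity>" using curve_var_finite_subinterval[OF fin, of a v] True by simp
      obtain \<delta> where "\<delta> > 0" and \<delta>: "\<And>s. a \<le> s \<Longrightarrow> s \<le> v \<Longrightarrow> s < a + \<delta> \<Longrightarrow> curve_var \<gamma> a s < ennreal \<epsilon>"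
        using curve_var_small_near_left_end[OF cont' fin' \<open>0 < \<epsilon>\<close>] by blast
      define d where "d = min (\<delta>/2) (v - a)"
      have d: "d > 0" "a + d \<le> v" "a + d < a + \<delta>" using \<open>\<delta> > 0\<close> True by (auto simp: d_def)
      then have "enn2real (curve_var \<gamma> a (a + d)) < \<epsilon>"
        using \<delta>[of "a + d"] by (cases "curve_var \<gamma> a (a + d)") (auto simp: ennreal_less_iff)
      then show ?thesis
        using arclen_fun_diff[OF uv fin, of a "a + d"] d True by (intro exI[of _ d]) auto
    qed
  qed
qed

lemma arclen_fun_lipschitz:
  assumes lip: "K-lipschitz_on {u..v} \<gamma>" and "u \<le> v" "x \<le> y"
  shows "arclen_fun \<gamma> u v y - arclen_fun \<gamma> u v x \<le> K * (y - x)"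
proof -
  let ?a = "max u (min v x)" and ?b = "max u (min v y)"
  have "0 \<le> K" using lip by (rule lipschitz_on_nonneg)
  have fin: "curve_var \<gamma> u v < \<infinity>"
    using curve_var_le_lipschitz[OF lip] by (simp add: le_less_trans)
  have "K-lipschitz_on {?a..?b} \<gamma>" using \<open>u \<le> v\<close> by (intro lipschitz_on_subset[OF lip]) auto
  then have "enn2real (curve_var \<gamma> ?a ?b) \<le> K * (?b - ?a)"
    using \<open>u \<le> v\<close> \<open>x \<le> y\<close> \<open>0 \<le> K\<close> by (intro enn2real_leI curve_var_le_lipschitz) auto
  also have "\<dots> \<le> K * (y - x)" using \<open>0 \<le> K\<close> \<open>u \<le> v\<close> \<open>x \<le> y\<close> by (intro mult_left_mono) auto
  finally show ?thesis using arclen_fun_diff[OF \<open>u \<le> v\<close> fin \<open>x \<le> y\<close>] by simp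
qed

lemma emeasure_arclen_measure_Ioc:
  assumes "u \<le> v" "curve_var \<gamma> u v < \<infinity>" "continuous_on {u..v} \<gamma>"
  shows "emeasure (arclen_measure \<gamma> u v) {u<..v} = curve_var \<gamma> u v"
proof -
  have "emeasure (arclen_measure \<gamma> u v) {u<..v} = ennreal (arclen_fun \<gamma> u v v - arclen_fun \<gamma> u v u)"
    unfolding arclen_measure_def using assms
    by (simp add: emeasure_interval_measure_Ioc arclen_fun_mono arclen_fun_continuous_at_right)
  also have "\<dots> = curve_var \<gamma> u v"
    using assms by (simp add: arclen_fun_def less_top)
  finally show ?thesis .
qed

lemma curve_rho_length_ge_dist:
  assumes cont: "continuous_on {0..1} \<gamma>" and "loc_rectifiable \<gamma>"
    and rho: "\<And>t. 0 < t \<Longrightarrow> t < 1 \<Longrightarrow> 1 \<le> \<rho> (\<gamma> t)"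
  shows "ennreal (cmod (\<gamma> 1 - \<gamma> 0)) \<le> curve_rho_length \<rho> \<gamma>"
proof (cases "\<forall>u v. 0 < u \<longrightarrow> u \<le> v \<longrightarrow> v < 1 \<longrightarrow>
    (\<lambda>t. \<rho> (\<gamma> t)) \<in> borel_measurable (arclen_measure \<gamma> u v)")
  case False
  then show ?thesis by (auto simp: curve_rho_length_def)
next
  case True
  have chord: "ennreal (cmod (\<gamma> v - \<gamma> u)) \<le> curve_rho_length \<rho> \<gamma>" if uv: "0 < u" "u \<le> v" "v < 1" for u v
  proof -
    have "continuous_on {u..v} \<gamma>" using uv by (intro continuous_on_subset[OF cont]) auto
    moreover have "curve_var \<gamma> u v < \<infinity>" using \<open>loc_rectifiable \<gamma>\<close> uv by (simp add: loc_rectifiable_def)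
    ultimately have "curve_var \<gamma> u v = emeasure (arclen_measure \<gamma> u v) {u<..v}"
      using uv by (simp add: emeasure_arclen_measure_Ioc)
    also have "\<dots> = (\<integral>\<^sup>+t. indicator {u<..v} t \<partial>arclen_measure \<gamma> u v)"
      by (simp add: arclen_measure_def)
    also have "\<dots> \<le> (\<integral>\<^sup>+t. ennreal (\<rho> (\<gamma> t)) \<partial>arclen_measure \<gamma> u v)"
      using rho uv by (intro nn_integral_mono) (auto simp: indicator_def)
    also have "\<dots> \<le> curve_rho_length \<rho> \<gamma>"
      unfolding curve_rho_length_def using True uv by (auto intro!: SUP_upper2[where i="(u, v)"])
    finally show ?thesis using curve_var_ge_dist[OF uv(2), of \<gamma>] by simp
  qed
  have from_start: "ennreal (cmod (\<gamma> v - \<gamma> 0)) \<le> curve_rho_length \<rho> \<gamma>" if "0 < v" "v < 1" for v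
  proof (rule tendsto_le[OF trivial_limit_at_right_real tendsto_const])
    show "((\<lambda>u. ennreal (cmod (\<gamma> v - \<gamma> u))) \<longlongrightarrow> ennreal (cmod (\<gamma> v - \<gamma> 0))) (at_right 0)"
      using continuous_on_Icc_at_rightD[OF cont] by (intro tendsto_intros) auto
    show "\<forall>\<^sub>F u in at_right 0. ennreal (cmod (\<gamma> v - \<gamma> u)) \<le> curve_rho_length \<rho> \<gamma>"
      using eventually_at_right_real[OF \<open>0 < v\<close>] by eventually_elim (use that in \<open>auto intro: chord\<close>)
  qed
  show ?thesis
  proof (rule tendsto_le[OF trivial_limit_at_left_real tendsto_const])
    show "((\<lambda>v. ennreal (cmod (\<gamma> v - \<gamma> 0))) \<longlongrightarrow> ennreal (cmod (\<gamma> 1 - \<gamma> 0))) (at_left 1)"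
      using continuous_on_Icc_at_leftD[OF cont] by (intro tendsto_intros) auto
    show "\<forall>\<^sub>F v in at_left 1. ennreal (cmod (\<gamma> v - \<gamma> 0)) \<le> curve_rho_length \<rho> \<gamma>"
      using eventually_at_left_real[of 0 1, OF zero_less_one] by eventually_elim (auto intro: from_start)
  qed
qed

lemma AE_interval_measure_arclen_fun_Ioc:
  assumes "u \<le> v" "curve_var \<gamma> u v < \<infinity>" "continuous_on {u..v} \<gamma>"
  shows "AE t in interval_measure (arclen_fun \<gamma> u v). t \<in> {u<..v}"
proof -
  have "- {u<..v} \<in> null_sets (interval_measure (arclen_fun \<gamma> u v))"
    using assms
    by (intro interval_measure_outside_null arclen_fun_mono arclen_fun_continuous_at_right)
       (auto simp: arclen_fun_def)
  then show ?thesis by (rule AE_I') auto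
qed

lemma interval_measure_arclen_fun_le_density:
  assumes lip: "K-lipschitz_on {u..v} \<gamma>" and "u \<le> v"
  shows "interval_measure (arclen_fun \<gamma> u v) \<le> density lborel (\<lambda>_. ennreal K)"
proof (rule interval_measure_le_density)
  have fin: "curve_var \<gamma> u v < \<infinity>"
    using curve_var_le_lipschitz[OF lip] by (simp add: le_less_trans)
  show "arclen_fun \<gamma> u v x \<le> arclen_fun \<gamma> u v y" if "x \<le> y" for x y
    by (rule arclen_fun_mono[OF \<open>u \<le> v\<close> fin that])
  show "arclen_fun \<gamma> u v y - arclen_fun \<gamma> u v x \<le> K * (y - x)" if "x \<le> y" for x y
    using lip \<open>u \<le> v\<close> that by (rule arclen_fun_lipschitz)
qed

lemma nn_integral_arclen_measure_le_lipschitz: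
  fixes \<gamma> :: "real \<Rightarrow> complex" and g :: "complex \<Rightarrow> ennreal"
  assumes lip: "K-lipschitz_on UNIV \<gamma>" and "u \<le> v"
    and g[measurable]: "g \<in> borel_measurable borel" and rho: "\<And>z. 0 \<le> \<rho> z"
    and N[measurable]: "N \<in> sets borel" and gN: "\<And>z. z \<notin> N \<Longrightarrow> ennreal (\<rho> z) = g z"
    and AE_N: "AE t in lborel. \<gamma> t \<notin> N"
  shows "(\<lambda>t. \<rho> (\<gamma> t)) \<in> borel_measurable (arclen_measure \<gamma> u v)"
    and "(\<integral>\<^sup>+t. ennreal (\<rho> (\<gamma> t)) \<partial>arclen_measure \<gamma> u v)
      \<le> ennreal K * (\<integral>\<^sup>+t. indicator {u<..v} t * g (\<gamma> t) \<partial>lborel)"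
proof -
  have [measurable]: "\<gamma> \<in> borel_measurable borel"
    using lipschitz_on_continuous_on[OF lip] by (rule borel_measurable_continuous_onI)
  define F where "F = arclen_fun \<gamma> u v"
  have lip_uv: "K-lipschitz_on {u..v} \<gamma>" by (rule lipschitz_on_subset[OF lip]) simp
  have dom: "interval_measure F \<le> density lborel (\<lambda>_. ennreal K)"
    unfolding F_def using lip_uv \<open>u \<le> v\<close> by (rule interval_measure_arclen_fun_le_density)
  have "AE t in density lborel (\<lambda>_. ennreal K). \<gamma> t \<notin> N"
    using AE_N by (simp add: AE_density)
  then have "AE t in interval_measure F. \<gamma> t \<notin> N"
    by (rule AE_le_measure[OF dom, rotated]) simp
  then have AE_g: "AE t in interval_measure F. ennreal (\<rho> (\<gamma> t)) = g (\<gamma> t)"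
    by eventually_elim (rule gN)
  have AE_in: "AE t in interval_measure F. t \<in> {u<..v}"
    unfolding F_def using \<open>u \<le> v\<close> curve_var_le_lipschitz[OF lip_uv] lipschitz_on_continuous_on[OF lip_uv]
    by (intro AE_interval_measure_arclen_fun_Ioc) (auto simp: le_less_trans)
  show "(\<lambda>t. \<rho> (\<gamma> t)) \<in> borel_measurable (arclen_measure \<gamma> u v)"
    unfolding arclen_measure_def F_def[symmetric]
  proof (rule measurable_completion_AE)
    show "(\<lambda>t. enn2real (g (\<gamma> t))) \<in> borel_measurable (interval_measure F)" by measurable
    show "AE t in interval_measure F. \<rho> (\<gamma> t) = enn2real (g (\<gamma> t))"
      using AE_g by eventually_elim (metis enn2real_ennreal rho)
  qed
  have "(\<integral>\<^sup>+t. ennreal (\<rho> (\<gamma> t)) \<partial>arclen_measure \<gamma> u v)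
      = (\<integral>\<^sup>+t. indicator {u<..v} t * g (\<gamma> t) \<partial>interval_measure F)"
    unfolding arclen_measure_def F_def[symmetric] nn_integral_completion
    by (rule nn_integral_cong_AE) (use AE_g AE_in in \<open>eventually_elim, simp\<close>)
  also have "\<dots> \<le> (\<integral>\<^sup>+t. indicator {u<..v} t * g (\<gamma> t) \<partial>density lborel (\<lambda>_. ennreal K))"
    by (rule nn_integral_mono_measure[OF _ dom]) simp
  also have "\<dots> = ennreal K * (\<integral>\<^sup>+t. indicator {u<..v} t * g (\<gamma> t) \<partial>lborel)"
    by (simp add: nn_integral_density nn_integral_cmult)
  finally show "(\<integral>\<^sup>+t. ennreal (\<rho> (\<gamma> t)) \<partial>arclen_measure \<gamma> u v)
      \<le> ennreal K * (\<integral>\<^sup>+t. indicator {u<..v} t * g (\<gamma> t) \<partial>lborel)" .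
qed

lemma curve_rho_length_le_lipschitz:
  fixes \<gamma> :: "real \<Rightarrow> complex" and g :: "complex \<Rightarrow> ennreal"
  assumes lip: "K-lipschitz_on UNIV \<gamma>"
    and g: "g \<in> borel_measurable borel" and rho: "\<And>z. 0 \<le> \<rho> z"
    and N: "N \<in> sets borel" and gN: "\<And>z. z \<notin> N \<Longrightarrow> ennreal (\<rho> z) = g z"
    and AE_N: "AE t in lborel. \<gamma> t \<notin> N"
  shows "curve_rho_length \<rho> \<gamma> \<le> ennreal K * (\<integral>\<^sup>+t. indicator {0<..<1} t * g (\<gamma> t) \<partial>lborel)"
proof -
  note piece = nn_integral_arclen_measure_le_lipschitz[OF lip _ g rho N gN AE_N]
  have "(\<integral>\<^sup>+t. ennreal (\<rho> (\<gamma> t)) \<partial>arclen_measure \<gamma> u v)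
      \<le> ennreal K * (\<integral>\<^sup>+t. indicator {0<..<1} t * g (\<gamma> t) \<partial>lborel)"
    if "0 < u" "u \<le> v" "v < 1" for u v
  proof -
    have "(\<integral>\<^sup>+t. ennreal (\<rho> (\<gamma> t)) \<partial>arclen_measure \<gamma> u v)
        \<le> ennreal K * (\<integral>\<^sup>+t. indicator {u<..v} t * g (\<gamma> t) \<partial>lborel)"
      by (rule piece(2)[OF \<open>u \<le> v\<close>])
    also have "\<dots> \<le> ennreal K * (\<integral>\<^sup>+t. indicator {0<..<1} t * g (\<gamma> t) \<partial>lborel)"
      using that by (intro mult_left_mono nn_integral_mono) (auto simp: indicator_def)
    finally show ?thesis .
  qed
  then show ?thesis
    unfolding curve_rho_length_def using piece(1) by (auto intro!: SUP_least)
qed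

section \<open>Lebesgue measure on the plane\<close>

lemma borel_measurable_Complex [measurable]:
  assumes [measurable]: "f \<in> borel_measurable M" "g \<in> borel_measurable M"
  shows "(\<lambda>x. Complex (f x) (g x)) \<in> borel_measurable M"
  unfolding Complex_eq by measurable

lemma lborel_complex_eq_distr:
  "(lborel :: complex measure) = distr (lborel \<Otimes>\<^sub>M lborel) borel (\<lambda>(x, y). Complex x y)"
proof (rule lborel_eqI)
  fix l u :: complex assume le: "\<And>b. b \<in> Basis \<Longrightarrow> l \<bullet> b \<le> u \<bullet> b"
  have "Re l \<le> Re u" "Im l \<le> Im u" using le[of 1] le[of \<i>] by auto
  moreover have "(\<lambda>(x, y). Complex x y) -` box l u \<inter> space (lborel \<Otimes>\<^sub>M lborel) =
      {Re l<..<Re u} \<times> {Im l<..<Im u}"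
    by (auto simp: box_def Basis_complex_def space_pair_measure)
  ultimately show "emeasure (distr (lborel \<Otimes>\<^sub>M lborel) borel (\<lambda>(x, y). Complex x y)) (box l u) =
      ennreal (\<Prod>b\<in>Basis. (u - l) \<bullet> b)"
    by (simp add: emeasure_distr lborel.emeasure_pair_measure_Times Basis_complex_def ennreal_mult
        case_prod_beta)
qed (simp add: case_prod_beta)

lemma nn_integral_lborel_complex:
  fixes f :: "complex \<Rightarrow> ennreal"
  assumes [measurable]: "f \<in> borel_measurable borel"
  shows "(\<integral>\<^sup>+z. f z \<partial>lborel) = (\<integral>\<^sup>+x. \<integral>\<^sup>+y. f (Complex x y) \<partial>lborel \<partial>lborel)"
  by (subst lborel_complex_eq_distr)
     (simp add: nn_integral_distr case_prod_beta lborel.nn_integral_fst[symmetric])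

lemma nn_integral_shear:
  fixes f :: "complex \<Rightarrow> ennreal" and \<Phi> :: "real \<Rightarrow> real"
  assumes [measurable]: "f \<in> borel_measurable borel" "\<Phi> \<in> borel_measurable borel"
  shows "(\<integral>\<^sup>+x. \<integral>\<^sup>+y. f (Complex (x + \<Phi> y) y) \<partial>lborel \<partial>lborel) = (\<integral>\<^sup>+z. f z \<partial>lborel)"
proof -
  have "(\<integral>\<^sup>+x. \<integral>\<^sup>+y. f (Complex (x + \<Phi> y) y) \<partial>lborel \<partial>lborel)
      = (\<integral>\<^sup>+y. \<integral>\<^sup>+x. f (Complex (x + \<Phi> y) y) \<partial>lborel \<partial>lborel)"
    by (rule lborel_pair.Fubini'[symmetric]) measurable
  also have "\<dots> = (\<integral>\<^sup>+y. \<integral>\<^sup>+x. f (Complex x y) \<partial>lborel \<partial>lborel)"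
  proof (rule nn_integral_cong)
    fix y
    show "(\<integral>\<^sup>+x. f (Complex (x + \<Phi> y) y) \<partial>lborel) = (\<integral>\<^sup>+x. f (Complex x y) \<partial>lborel)"
      using nn_integral_real_affine[of "\<lambda>x. f (Complex x y)" 1 "\<Phi> y"] by (simp add: add.commute)
  qed
  also have "\<dots> = (\<integral>\<^sup>+x. \<integral>\<^sup>+y. f (Complex x y) \<partial>lborel \<partial>lborel)"
    by (rule lborel_pair.Fubini') measurable
  also have "\<dots> = (\<integral>\<^sup>+z. f z \<partial>lborel)" by (simp add: nn_integral_lborel_complex)
  finally show ?thesis .
qed

lemma AE_shear:
  fixes \<Phi> :: "real \<Rightarrow> real"
  assumes [measurable]: "\<Phi> \<in> borel_measurable borel" and N: "N \<in> null_sets lborel"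
  shows "AE x in lborel. AE y in lborel. Complex (x + \<Phi> y) y \<notin> N"
proof -
  have [measurable]: "N \<in> sets borel" using null_setsD2[OF N] by simp
  have "(\<integral>\<^sup>+x. \<integral>\<^sup>+y. indicator N (Complex (x + \<Phi> y) y) \<partial>lborel \<partial>lborel) = 0"
    using N by (simp add: nn_integral_shear null_sets_def)
  then have "AE x in lborel. (\<integral>\<^sup>+y. indicator N (Complex (x + \<Phi> y) y) \<partial>lborel) = 0"
    by (subst (asm) nn_integral_0_iff_AE) measurable
  then show ?thesis
    by eventually_elim (simp add: nn_integral_0_iff_AE indicator_eq_0_iff)
qed

lemma lipschitz_on_Complex:
  assumes "L-lipschitz_on A f" "M-lipschitz_on A g"
  shows "(sqrt (L\<^sup>2 + M\<^sup>2))-lipschitz_on A (\<lambda>a. Complex (f a) (g a))"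
proof -
  have "dist (Complex a b) (Complex c d) = dist (a, b) (c, d)" for a b c d
    by (simp add: dist_complex_def cmod_def dist_Pair_Pair dist_real_def)
  then show ?thesis
    using lipschitz_on_Pair[OF assms] by (simp add: lipschitz_on_def)
qed

section \<open>Curvilinear rectangles\<close>

lemma joining_family_cong:
  assumes "a1 \<le> a2" "\<And>y. y \<in> {a1..a2} \<Longrightarrow> \<Phi> y = \<Psi> y"
  shows "joining_family a1 a2 \<Phi> bb = joining_family a1 a2 \<Psi> bb"
proof -
  have "curv_rect a1 a2 \<Phi> bb = curv_rect a1 a2 \<Psi> bb" using assms(2) by (auto simp: curv_rect_def)
  moreover have "horiz_side \<Phi> bb a1 = horiz_side \<Psi> bb a1" "horiz_side \<Phi> bb a2 = horiz_side \<Psi> bb a2"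
    using assms by (auto simp: horiz_side_def)
  ultimately show ?thesis unfolding joining_family_def by simp
qed

lemma joining_family_height_le_dist:
  assumes "\<gamma> \<in> joining_family a1 a2 \<Phi> bb"
  shows "\<bar>a2 - a1\<bar> \<le> cmod (\<gamma> 1 - \<gamma> 0)"
proof -
  have "\<bar>Im (\<gamma> 1 - \<gamma> 0)\<bar> = \<bar>a2 - a1\<bar>"
    using assms by (auto simp: joining_family_def horiz_side_def)
  then show ?thesis using abs_Im_le_cmod by metis
qed

lemma indicator_curv_rect_shear:
  "indicator (curv_rect a1 a2 \<Phi> bb) (Complex (x + \<Phi> y) y)
    = indicator {0<..<bb} x * (indicator {a1<..<a2} y :: ennreal)"
  by (auto simp: curv_rect_def indicator_def)

lemma emeasure_curv_rect:
  assumes [measurable]: "\<Phi> \<in> borel_measurable borel" and "a1 \<le> a2" "0 \<le> bb"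
  shows "emeasure lborel (curv_rect a1 a2 \<Phi> bb) = ennreal (bb * (a2 - a1))"
proof -
  have [measurable]: "curv_rect a1 a2 \<Phi> bb \<in> sets borel"
    unfolding curv_rect_def by measurable
  have "emeasure lborel (curv_rect a1 a2 \<Phi> bb)
      = (\<integral>\<^sup>+x. \<integral>\<^sup>+y. indicator (curv_rect a1 a2 \<Phi> bb) (Complex (x + \<Phi> y) y) \<partial>lborel \<partial>lborel)"
    by (simp add: nn_integral_shear)
  also have "\<dots> = (\<integral>\<^sup>+x. indicator {0<..<bb} x * ennreal (a2 - a1) \<partial>lborel)"
    using \<open>a1 \<le> a2\<close> by (simp add: indicator_curv_rect_shear nn_integral_cmult_indicator)
  also have "\<dots> = ennreal (bb * (a2 - a1))"
    using assms by (simp add: nn_integral_multc ennreal_mult)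
  finally show ?thesis .
qed

lemma extremal_length_rectangle_ge:
  assumes "a1 < a2" "0 < bb"
  shows "ennreal ((a2 - a1) / bb) \<le> extremal_length (joining_family a1 a2 (\<lambda>_. 0) bb)"
proof -
  define R where "R = curv_rect a1 a2 (\<lambda>_. 0) bb"
  define \<rho> where "\<rho> = (indicator R :: complex \<Rightarrow> real)"
  have [measurable]: "R \<in> sets borel" unfolding R_def curv_rect_def by measurable
  have area: "rho_area \<rho> = ennreal (bb * (a2 - a1))"
  proof -
    have "rho_area \<rho> = (\<integral>\<^sup>+z. indicator R z \<partial>lborel)"
      unfolding rho_area_def \<rho>_def nn_integral_completion
      by (intro nn_integral_cong) (auto simp: indicator_def)
    also have "\<dots> = ennreal (bb * (a2 - a1))"
      using assms \<open>R \<in> sets borel\<close> by (subst nn_integral_indicator) (simp_all add: R_def emeasure_curv_rect)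
    finally show ?thesis .
  qed
  have adm: "admissible_metric \<rho>"
    unfolding admissible_metric_def using area assms
    by (auto simp: \<rho>_def intro: measurable_completion)
  have "ennreal (a2 - a1) \<le> curve_rho_length \<rho> \<gamma>"
    if \<gamma>: "\<gamma> \<in> joining_family a1 a2 (\<lambda>_. 0) bb" for \<gamma>
  proof -
    have "ennreal (a2 - a1) \<le> ennreal (cmod (\<gamma> 1 - \<gamma> 0))"
      using joining_family_height_le_dist[OF \<gamma>] by (simp add: ennreal_leI)
    also have "\<dots> \<le> curve_rho_length \<rho> \<gamma>"
      using \<gamma> by (intro curve_rho_length_ge_dist) (auto simp: joining_family_def \<rho>_def R_def)
    finally show ?thesis .
  qed
  then have L: "ennreal (a2 - a1) \<le> family_rho_length (joining_family a1 a2 (\<lambda>_. 0) bb) \<rho>"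
    unfolding family_rho_length_def by (rule INF_greatest)
  have "ennreal ((a2 - a1) / bb) = ennreal ((a2 - a1)\<^sup>2) / ennreal (bb * (a2 - a1))"
    using assms by (simp add: divide_ennreal power2_eq_square)
  also have "\<dots> = (ennreal (a2 - a1))\<^sup>2 / rho_area \<rho>"
    using assms by (simp add: area ennreal_power)
  also have "\<dots> \<le> (family_rho_length (joining_family a1 a2 (\<lambda>_. 0) bb) \<rho>)\<^sup>2 / rho_area \<rho>"
    by (intro divide_right_mono_ennreal power_mono L) simp
  also have "\<dots> \<le> extremal_length (joining_family a1 a2 (\<lambda>_. 0) bb)"
    unfolding extremal_length_def using adm by (intro SUP_upper) simp
  finally show ?thesis .
qed

definition graph_path :: "(real \<Rightarrow> real) \<Rightarrow> real \<Rightarrow> real \<Rightarrow> real \<Rightarrow> real \<Rightarrow> complex" where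
  "graph_path \<Phi> a1 a2 x t = Complex (x + \<Phi> (a1 + (a2 - a1) * t)) (a1 + (a2 - a1) * t)"

lemma graph_path_lipschitz:
  assumes "C-lipschitz_on UNIV \<Phi>" "a1 \<le> a2"
  shows "(sqrt (1 + C\<^sup>2) * (a2 - a1))-lipschitz_on UNIV (graph_path \<Phi> a1 a2 x)"
proof -
  have height: "(a2 - a1)-lipschitz_on UNIV (\<lambda>t. a1 + (a2 - a1) * t)"
    using \<open>a1 \<le> a2\<close> by (intro lipschitz_onI) (auto simp: dist_real_def abs_mult simp flip: right_diff_distrib)
  have "(C * (a2 - a1))-lipschitz_on UNIV (\<lambda>t. x + \<Phi> (a1 + (a2 - a1) * t))"
    using lipschitz_on_add[OF lipschitz_on_constant[where c=x]
        lipschitz_on_compose2[OF height lipschitz_on_subset[OF assms(1)]]]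
    by (simp add: mult.commute)
  from lipschitz_on_Complex[OF this height]
  have "(sqrt ((C * (a2 - a1))\<^sup>2 + (a2 - a1)\<^sup>2))-lipschitz_on UNIV (graph_path \<Phi> a1 a2 x)"
    by (simp add: graph_path_def)
  moreover have "(C * (a2 - a1))\<^sup>2 + (a2 - a1)\<^sup>2 = (1 + C\<^sup>2) * (a2 - a1)\<^sup>2"
    by (simp add: power_mult_distrib distrib_right)
  then have "sqrt ((C * (a2 - a1))\<^sup>2 + (a2 - a1)\<^sup>2) = sqrt (1 + C\<^sup>2) * (a2 - a1)"
    using \<open>a1 \<le> a2\<close> by (simp add: real_sqrt_mult)
  ultimately show ?thesis by simp
qed

lemma graph_path_in_joining_family:
  assumes "C-lipschitz_on UNIV \<Phi>" "a1 < a2" "0 < x" "x < bb"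
  shows "graph_path \<Phi> a1 a2 x \<in> joining_family a1 a2 \<Phi> bb"
proof -
  note lip = graph_path_lipschitz[OF assms(1) less_imp_le[OF assms(2)], of x]
  have "continuous_on {0..1} (graph_path \<Phi> a1 a2 x)"
    using lipschitz_on_continuous_on[OF lip] \<open>a1 < a2\<close> by (auto intro: continuous_on_subset)
  moreover have "curve_var (graph_path \<Phi> a1 a2 x) u v < \<infinity>" for u v
    using curve_var_le_lipschitz[OF lipschitz_on_subset[OF lip, of "{u..v}"]] by (simp add: le_less_trans)
  then have "loc_rectifiable (graph_path \<Phi> a1 a2 x)"
    unfolding loc_rectifiable_def by blast
  moreover have "a1 < a1 + (a2 - a1) * t \<and> a1 + (a2 - a1) * t < a2" if "0 < t" "t < 1" for t
  proof -
    have "(a2 - a1) * t < (a2 - a1) * 1" using \<open>a1 < a2\<close> that by (intro mult_strict_left_mono) auto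
    moreover have "0 < (a2 - a1) * t" using \<open>a1 < a2\<close> that by simp
    ultimately show ?thesis by simp
  qed
  ultimately show ?thesis
    using assms by (auto simp: joining_family_def curv_rect_def horiz_side_def graph_path_def)
qed

lemma curve_rho_length_graph_path_le:
  fixes g :: "complex \<Rightarrow> ennreal"
  assumes lip: "C-lipschitz_on UNIV \<Phi>" and "a1 < a2"
    and g[measurable]: "g \<in> borel_measurable borel" and rho: "\<And>z. 0 \<le> \<rho> z"
    and N[measurable]: "N \<in> sets borel" and gN: "\<And>z. z \<notin> N \<Longrightarrow> ennreal (\<rho> z) = g z"
    and AE_N: "AE y in lborel. Complex (x + \<Phi> y) y \<notin> N"
  shows "curve_rho_length \<rho> (graph_path \<Phi> a1 a2 x)
    \<le> ennreal (sqrt (1 + C\<^sup>2)) * (\<integral>\<^sup>+y. indicator {a1<..<a2} y * g (Complex (x + \<Phi> y) y) \<partial>lborel)"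
proof -
  define h where "h = a2 - a1"
  have "0 < h" and a2: "a2 = a1 + h" using \<open>a1 < a2\<close> by (simp_all add: h_def)
  have [measurable]: "\<Phi> \<in> borel_measurable borel"
    using lipschitz_on_continuous_on[OF lip] by (rule borel_measurable_continuous_onI)
  have "AE t in lborel. Complex (x + \<Phi> (a1 + h * t)) (a1 + h * t) \<notin> N"
    using \<open>0 < h\<close> by (intro AE_borel_affine AE_N) auto
  then have "AE t in lborel. graph_path \<Phi> a1 a2 x t \<notin> N"
    by (simp add: graph_path_def h_def)
  then have "curve_rho_length \<rho> (graph_path \<Phi> a1 a2 x)
      \<le> ennreal (sqrt (1 + C\<^sup>2) * h) * (\<integral>\<^sup>+t. indicator {0<..<1} t * g (graph_path \<Phi> a1 a2 x t) \<partial>lborel)"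
    unfolding h_def using \<open>a1 < a2\<close>
    by (intro curve_rho_length_le_lipschitz[OF graph_path_lipschitz[OF lip]] g rho N gN) auto
  also have "\<dots> = ennreal (sqrt (1 + C\<^sup>2))
      * (ennreal h * (\<integral>\<^sup>+t. indicator {a1<..<a2} (a1 + h * t)
          * g (Complex (x + \<Phi> (a1 + h * t)) (a1 + h * t)) \<partial>lborel))"
  proof -
    have "a1 + h * t \<in> {a1<..<a2} \<longleftrightarrow> t \<in> {0<..<1}" for t
      using \<open>0 < h\<close> mult_less_cancel_left_pos[of h t 1] by (auto simp: a2 zero_less_mult_iff)
    then show ?thesis
      using \<open>0 < h\<close> by (simp add: graph_path_def h_def ennreal_mult mult.assoc indicator_def)
  qed
  also have "\<dots> = ennreal (sqrt (1 + C\<^sup>2))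
      * (\<integral>\<^sup>+y. indicator {a1<..<a2} y * g (Complex (x + \<Phi> y) y) \<partial>lborel)"
    using \<open>0 < h\<close> by (subst nn_integral_real_affine[where c=h and t=a1]) auto
  finally show ?thesis .
qed

lemma family_rho_length_le_integral:
  fixes g :: "complex \<Rightarrow> ennreal"
  assumes lip: "C-lipschitz_on UNIV \<Phi>" and "a1 < a2"
    and g[measurable]: "g \<in> borel_measurable borel" and rho: "\<And>z. 0 \<le> \<rho> z"
    and N: "N \<in> null_sets lborel" and gN: "\<And>z. z \<notin> N \<Longrightarrow> ennreal (\<rho> z) = g z"
  shows "ennreal bb * family_rho_length (joining_family a1 a2 \<Phi> bb) \<rho>
    \<le> ennreal (sqrt (1 + C\<^sup>2)) * (\<integral>\<^sup>+z. indicator (curv_rect a1 a2 \<Phi> bb) z * g z \<partial>lborel)"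
proof -
  define L where "L = family_rho_length (joining_family a1 a2 \<Phi> bb) \<rho>"
  define c where "c = ennreal (sqrt (1 + C\<^sup>2))"
  define I where "I x = (\<integral>\<^sup>+y. indicator {a1<..<a2} y * g (Complex (x + \<Phi> y) y) \<partial>lborel)" for x
  have [measurable]: "\<Phi> \<in> borel_measurable borel"
    using lipschitz_on_continuous_on[OF lip] by (rule borel_measurable_continuous_onI)
  have [measurable]: "N \<in> sets borel" using null_setsD2[OF N] by simp
  have [measurable]: "curv_rect a1 a2 \<Phi> bb \<in> sets borel" unfolding curv_rect_def by measurable
  have "AE x in lborel. AE y in lborel. Complex (x + \<Phi> y) y \<notin> N"
    by (rule AE_shear[OF _ N]) measurable
  then have "AE x in lborel. indicator {0<..<bb} x * L \<le> indicator {0<..<bb} x * (c * I x)"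
  proof eventually_elim
    case (elim x)
    show ?case
    proof (cases "x \<in> {0<..<bb}")
      case True
      then have "L \<le> curve_rho_length \<rho> (graph_path \<Phi> a1 a2 x)"
        unfolding L_def family_rho_length_def
        using graph_path_in_joining_family[OF lip \<open>a1 < a2\<close>] by (auto intro: INF_lower)
      also have "\<dots> \<le> c * I x"
        unfolding c_def I_def by (rule curve_rho_length_graph_path_le[OF lip \<open>a1 < a2\<close> g rho _ gN elim]) simp
      finally show ?thesis using True by simp
    qed simp
  qed
  moreover have "ennreal bb * L = (\<integral>\<^sup>+x. indicator {0<..<bb} x * L \<partial>lborel)"
    by (cases "0 \<le> bb") (simp_all add: nn_integral_multc ennreal_neg)
  ultimately have "ennreal bb * L \<le> (\<integral>\<^sup>+x. indicator {0<..<bb} x * (c * I x) \<partial>lborel)"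
    by (simp add: nn_integral_mono_AE)
  also have "\<dots> = c * (\<integral>\<^sup>+x. \<integral>\<^sup>+y. indicator (curv_rect a1 a2 \<Phi> bb) (Complex (x + \<Phi> y) y)
      * g (Complex (x + \<Phi> y) y) \<partial>lborel \<partial>lborel)"
    by (simp add: indicator_curv_rect_shear I_def nn_integral_cmult mult.assoc mult.left_commute)
  also have "\<dots> = c * (\<integral>\<^sup>+z. indicator (curv_rect a1 a2 \<Phi> bb) z * g z \<partial>lborel)"
    by (subst nn_integral_shear[where f="\<lambda>z. indicator (curv_rect a1 a2 \<Phi> bb) z * g z"]) simp_all
  finally show ?thesis unfolding L_def c_def .
qed

lemma ennreal_power2_div_le:
  fixes L A :: ennreal
  assumes "ennreal (b\<^sup>2) * L\<^sup>2 \<le> ennreal (r * b) * A" "0 < b" "0 \<le> r" "0 < A" "A < \<infinity>"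
  shows "L\<^sup>2 / A \<le> ennreal (r / b)"
proof -
  obtain a where a: "A = ennreal a" "0 < a"
    using assms(4,5) by (cases A) (auto simp: ennreal_less_zero_iff)
  have "L\<^sup>2 \<noteq> \<infinity>"
    using assms(1,2) a by (auto simp: ennreal_mult_top top_unique ennreal_mult_eq_top_iff)
  then obtain l where l: "L\<^sup>2 = ennreal l" "0 \<le> l" by (cases "L\<^sup>2") auto
  have "b\<^sup>2 * l \<le> r * b * a"
    using assms(1-3) a l by (simp add: ennreal_mult[symmetric])
  then have "l / a \<le> r / b"
    using assms(2) a by (simp add: field_simps power2_eq_square)
  then show ?thesis
    using a l by (simp add: divide_ennreal ennreal_leI)
qed

lemma admissible_metric_borel_representative:
  assumes "admissible_metric \<rho>"
  obtains g N where "g \<in> borel_measurable borel" "N \<in> null_sets lborel"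
    "\<And>z. z \<notin> N \<Longrightarrow> ennreal (\<rho> z) = g z" "rho_area \<rho> = (\<integral>\<^sup>+z. g z ^ 2 \<partial>lborel)"
proof -
  have rho: "\<And>z. 0 \<le> \<rho> z" and "\<rho> \<in> borel_measurable lebesgue"
    using assms by (auto simp: admissible_metric_def)
  then have "(\<lambda>z. ennreal (\<rho> z)) \<in> borel_measurable (completion lborel)" by simp
  then obtain g where g: "g \<in> borel_measurable borel" and AE_g: "AE z in lborel. ennreal (\<rho> z) = g z"
    by (auto dest: completion_ex_borel_measurable)
  then obtain N where N: "N \<in> null_sets lborel" "\<And>z. z \<notin> N \<Longrightarrow> ennreal (\<rho> z) = g z"
    by (auto elim!: AE_E simp: null_sets_def) blast
  have "rho_area \<rho> = (\<integral>\<^sup>+z. ennreal (\<rho> z) ^ 2 \<partial>lborel)"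
    unfolding rho_area_def nn_integral_completion using rho by (simp add: ennreal_power)
  also have "\<dots> = (\<integral>\<^sup>+z. g z ^ 2 \<partial>lborel)"
    using AE_g by (intro nn_integral_cong_AE) auto
  finally show ?thesis using that[OF g N] by blast
qed

lemma nn_integral_indicator_times_power2_le:
  fixes g :: "'a \<Rightarrow> ennreal"
  assumes [measurable]: "R \<in> sets M" "g \<in> borel_measurable M"
  shows "(\<integral>\<^sup>+z. indicator R z * g z \<partial>M)\<^sup>2 \<le> emeasure M R * (\<integral>\<^sup>+z. g z ^ 2 \<partial>M)"
proof -
  have "(\<integral>\<^sup>+z. indicator R z ^ 2 \<partial>M) = (\<integral>\<^sup>+z. indicator R z \<partial>M)"
    by (intro nn_integral_cong) (simp add: indicator_def)
  then show ?thesis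
    using Cauchy_Schwarz_nn_integral[of "indicator R" M g] by simp
qed

lemma family_rho_length_ratio_le:
  assumes lip: "C-lipschitz_on UNIV \<Phi>" and "a1 < a2" "0 < bb" and adm: "admissible_metric \<rho>"
  shows "(family_rho_length (joining_family a1 a2 \<Phi> bb) \<rho>)\<^sup>2 / rho_area \<rho>
    \<le> ennreal ((1 + C\<^sup>2) * (a2 - a1) / bb)"
proof -
  define L where "L = family_rho_length (joining_family a1 a2 \<Phi> bb) \<rho>"
  define R where "R = curv_rect a1 a2 \<Phi> bb"
  obtain g N where g[measurable]: "g \<in> borel_measurable borel" and N: "N \<in> null_sets lborel"
    and gN: "\<And>z. z \<notin> N \<Longrightarrow> ennreal (\<rho> z) = g z" and area: "rho_area \<rho> = (\<integral>\<^sup>+z. g z ^ 2 \<partial>lborel)"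
    using admissible_metric_borel_representative[OF adm] by blast
  have rho: "\<And>z. 0 \<le> \<rho> z" and A: "0 < rho_area \<rho>" "rho_area \<rho> < \<infinity>"
    using adm by (auto simp: admissible_metric_def)
  have [measurable]: "\<Phi> \<in> borel_measurable borel"
    using lipschitz_on_continuous_on[OF lip] by (rule borel_measurable_continuous_onI)
  have [measurable]: "R \<in> sets borel" unfolding R_def curv_rect_def by measurable
  have "ennreal (bb\<^sup>2) * L\<^sup>2 = (ennreal bb * L)\<^sup>2"
    using \<open>0 < bb\<close> by (simp add: power_mult_distrib ennreal_power)
  also have "\<dots> \<le> (ennreal (sqrt (1 + C\<^sup>2)) * (\<integral>\<^sup>+z. indicator R z * g z \<partial>lborel))\<^sup>2"
    unfolding L_def R_def using family_rho_length_le_integral[OF lip \<open>a1 < a2\<close> g rho N gN]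
    by (rule power_mono) auto
  also have "\<dots> = ennreal (1 + C\<^sup>2) * (\<integral>\<^sup>+z. indicator R z * g z \<partial>lborel)\<^sup>2"
    by (simp add: power_mult_distrib ennreal_power)
  also have "\<dots> \<le> ennreal (1 + C\<^sup>2) * (emeasure lborel R * rho_area \<rho>)"
    unfolding area by (intro mult_left_mono nn_integral_indicator_times_power2_le) simp_all
  also have "\<dots> = ennreal ((1 + C\<^sup>2) * (a2 - a1) * bb) * rho_area \<rho>"
    using \<open>a1 < a2\<close> \<open>0 < bb\<close>
    by (simp add: R_def emeasure_curv_rect ennreal_mult'[symmetric] mult_ac del: ennreal_plus)
  finally show ?thesis
    unfolding L_def using \<open>0 < bb\<close> \<open>a1 < a2\<close> A by (intro ennreal_power2_div_le) auto
qed

lemma extremal_length_joining_family_le: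
  assumes "C-lipschitz_on UNIV \<Phi>" "a1 < a2" "0 < bb"
  shows "extremal_length (joining_family a1 a2 \<Phi> bb) \<le> ennreal ((1 + C\<^sup>2) * (a2 - a1) / bb)"
  unfolding extremal_length_def using family_rho_length_ratio_le[OF assms] by (auto intro: SUP_least)

lemma lipschitz_on_clamp_of_deriv_bound:
  fixes \<Phi> :: "real \<Rightarrow> real"
  assumes "a1 < a2" and cont: "continuous_on {a1..a2} \<Phi>"
    and diff: "\<forall>y\<in>{a1<..<a2}. \<Phi> differentiable (at y)"
    and bound: "\<forall>y\<in>{a1<..<a2}. \<bar>deriv \<Phi> y\<bar> \<le> C"
  shows "C-lipschitz_on UNIV (\<lambda>y. \<Phi> (max a1 (min a2 y)))"
proof -
  have "0 \<le> C" using bound \<open>a1 < a2\<close> dense[OF \<open>a1 < a2\<close>] by (meson abs_ge_zero greaterThanLessThan_iff order.trans)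
  have "C-lipschitz_on {a1<..<a2} \<Phi>"
  proof (rule lipschitz_onI[OF _ \<open>0 \<le> C\<close>])
    fix x y assume "x \<in> {a1<..<a2}" "y \<in> {a1<..<a2}"
    then show "dist (\<Phi> x) (\<Phi> y) \<le> C * dist x y"
      unfolding dist_real_def
      using diff bound
      by (intro field_differentiable_bound[of "{a1<..<a2}" \<Phi> "deriv \<Phi>", simplified])
         (auto simp: DERIV_deriv_iff_real_differentiable intro: has_field_derivative_at_within)
  qed
  then have "C-lipschitz_on {a1..a2} \<Phi>"
    using lipschitz_on_closure[of C "{a1<..<a2}" \<Phi>] cont \<open>a1 < a2\<close> by simp
  then have "C-lipschitz_on (range (\<lambda>y. max a1 (min a2 y))) \<Phi>"
    by (rule lipschitz_on_subset) (use \<open>a1 < a2\<close> in auto)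
  moreover have "1-lipschitz_on UNIV (\<lambda>y. max a1 (min a2 y))"
    by (intro lipschitz_onI) (auto simp: dist_real_def max_def min_def)
  ultimately show ?thesis
    using lipschitz_on_compose2 by fastforce
qed

theorem lemma12:
  fixes \<Phi> :: "real \<Rightarrow> real" and a1 a2 bb C :: real
  assumes "a1 < a2" and "0 < bb"
    and "continuous_on {a1..a2} \<Phi>"
    and "\<forall>y\<in>{a1<..<a2}. \<Phi> differentiable (at y)"
    and "continuous_on {a1<..<a2} (deriv \<Phi>)"
    and "\<forall>y\<in>{a1<..<a2}. \<bar>deriv \<Phi> y\<bar> \<le> C"
  shows "extremal_length (joining_family a1 a2 \<Phi> bb)
           \<le> ennreal (1 + C\<^sup>2) * extremal_length (joining_family a1 a2 (\<lambda>_. 0) bb)"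
proof -
  define \<Psi> where "\<Psi> y = \<Phi> (max a1 (min a2 y))" for y
  have lip: "C-lipschitz_on UNIV \<Psi>"
    unfolding \<Psi>_def using assms(1,3,4,6) by (rule lipschitz_on_clamp_of_deriv_bound)
  have "joining_family a1 a2 \<Phi> bb = joining_family a1 a2 \<Psi> bb"
    using \<open>a1 < a2\<close> by (intro joining_family_cong) (auto simp: \<Psi>_def)
  then have "extremal_length (joining_family a1 a2 \<Phi> bb) \<le> ennreal ((1 + C\<^sup>2) * ((a2 - a1) / bb))"
    using extremal_length_joining_family_le[OF lip \<open>a1 < a2\<close> \<open>0 < bb\<close>] by simp
  also have "\<dots> = ennreal (1 + C\<^sup>2) * ennreal ((a2 - a1) / bb)"
    using \<open>a1 < a2\<close> \<open>0 < bb\<close> by (intro ennreal_mult) auto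
  also have "\<dots> \<le> ennreal (1 + C\<^sup>2) * extremal_length (joining_family a1 a2 (\<lambda>_. 0) bb)"
    using \<open>a1 < a2\<close> \<open>0 < bb\<close> by (intro mult_left_mono extremal_length_rectangle_ge) auto
  finally show ?thesis .
qed

end
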